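(* Let $\lambda\in\mathbb{R}$ and let $H_0:\mathbb{R}^n\times[0,T]\times\mathbb{R}^n\to\mathbb{R}$ satisfy: (a) $|H_0(x,t,p)-H_0(y,t,p)|\le C_1(\beta+|p|)|x-y|$ with $C_1\ge0$, $\beta\in\{0,1\}$; (b) $|H_0(x,t,p)-H_0(x,t,q)|\le(A_2|x|+B_2)|p-q|$ with $A_2,B_2\ge0$; (c) $p\mapsto H_0(x,t,p)$ convex; (d) $H_0\in C^2$; (e) $D_{pp}H_0$ positive definite everywhere. Let $u\in C(\mathbb{R}^n\times[0,T))$ be a viscosity solution of $$u_t+\lambda u+H_0(x,t,D_xu)=0\ \text{in }\mathbb{R}^n\times(0,T),\qquad u(x,0)=u_0(x).$$ Let $u$ be differentiable at $(x,t)\in\mathbb{R}^n\times(0,T)$ and let $(\xi,\eta)\in C^1([0,t];\mathbb{R}^n)^2$ solve $\xi'(s)=D_pH_0(\xi(s),s,\eta(s))$, $\eta'(s)=-D_xH_0(\xi(s),s,\eta(s))-\lambda\eta(s)$ on $[0,t]$ with $\xi(t)=x$, $\eta(t)=D_xu(x,t)$. Then $$|D_xu(x,t)-e^{-\lambda t}\eta(0)|\le\frac{C_1\beta}{C_1+\lambda}(e^{C_1t}-e^{-\lambda t})+|D_xu(x,t)|(e^{C_1t}-1)\ \ (\lambda\ne-C_1),$$ $$|D_xu(x,t)-e^{C_1t}\eta(0)|\le C_1\beta te^{C_1t}+|D_xu(x,t)|(e^{C_1t}-1)\ \ (\lambda=-C_1),$$ $$|D_xu(x,t)-e^{-\lambda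 t}\eta(0)|\le\frac{C_1\beta}{C_1-\lambda}(e^{(C_1-\lambda)t}-1)+|\eta(0)|(e^{(C_1-\lambda)t}-e^{-\lambda t})\ \ (\lambda\ne C_1),$$ $$|D_xu(x,t)-e^{-C_1t}\eta(0)|\le C_1\beta t+|\eta(0)|(1-e^{-C_1t})\ \ (\lambda=C_1).$$ Consequently $|D_xu(x,t)|\ge|\eta(0)|e^{-(C_1+\lambda)t}-\frac{C_1\beta}{C_1+\lambda}(1-e^{-(C_1+\lambda)t})$ if $\lambda\ne-C_1$; $|D_xu(x,t)|\ge|\eta(0)|-C_1\beta t$ if $\lambda=-C_1$; $|D_xu(x,t)|\le|\eta(0)|e^{(C_1-\lambda)t}+\frac{C_1\beta}{C_1-\lambda}(e^{(C_1-\lambda)t}-1)$ if $\lambda\ne C_1$; $|D_xu(x,t)|\le|\eta(0)|+C_1\beta t$ if $\lambda=C_1$.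
   Context: $T>0$, $u_0:\mathbb{R}^n\to\mathbb{R}$ Lipschitz. Viscosity solution of $u_t+F(x,t,u,D_xu)=0$, $u(\cdot,0)=u_0$: $u\in C(\mathbb{R}^n\times[0,T))$ with $u(\cdot,0)=u_0$ such that for every $\phi\in C^1(\mathbb{R}^n\times(0,T))$, if $u-\phi$ has a local max (resp. min) at $(x,t)\in\mathbb{R}^n\times(0,T)$ then $\phi_t+F(x,t,u(x,t),D_x\phi(x,t))\le0$ (resp. $\ge0$). Here $F(x,t,u,p)=\lambda u+H_0(x,t,p)$. *)

theory Defs
  imports "HOL-Analysis.Analysis"
begin

definition C2_on :: "'b::real_normed_vector set \<Rightarrow> ('b \<Rightarrow> real) \<Rightarrow> bool" where
  "C2_on S f \<longleftrightarrow> (\<exists>f' f''.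
      (\<forall>z\<in>S. (f has_derivative blinfun_apply (f' z)) (at z within S)) \<and>
      (\<forall>z\<in>S. (f' has_derivative blinfun_apply (f'' z)) (at z within S)) \<and>
      continuous_on S f'')"

definition viscosity_solution ::
  "real \<Rightarrow> real \<Rightarrow> ('a::euclidean_space \<Rightarrow> real \<Rightarrow> 'a \<Rightarrow> real) \<Rightarrow> ('a \<Rightarrow> real)
     \<Rightarrow> ('a \<Rightarrow> real \<Rightarrow> real) \<Rightarrow> bool" where
  "viscosity_solution T lam H0 u0 u \<longleftrightarrow>
     continuous_on (UNIV \<times> {0..<T}) (\<lambda>(x, t). u x t) \<and>
     (\<forall>x. u x 0 = u0 x) \<and>
     (\<forall>phi phix phit.
        ((\<forall>x t. 0 < t \<and> t < T \<longrightarrow>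
            ((\<lambda>(y, s). phi y s) has_derivative (\<lambda>(h, k). phix x t \<bullet> h + phit x t * k)) (at (x, t))) \<and>
         continuous_on (UNIV \<times> {0<..<T}) (\<lambda>(x, t). phix x t) \<and>
         continuous_on (UNIV \<times> {0<..<T}) (\<lambda>(x, t). phit x t)) \<longrightarrow>
        (\<forall>x t. 0 < t \<and> t < T \<longrightarrow>
           ((\<exists>e>0. \<forall>y s. 0 < s \<and> s < T \<and> dist (y, s) (x, t) < e \<longrightarrow>
                u y s - phi y s \<le> u x t - phi x t) \<longrightarrow>
              phit x t + lam * u x t + H0 x t (phix x t) \<le> 0) \<and>
           ((\<exists>e>0. \<forall>y s. 0 < s \<and> s < T \<and> dist (y, s) (x, t) < e \<longrightarrow>
                u y s - phi y s \<ge> u x t - phi x t) \<longrightarrow>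
              phit x t + lam * u x t + H0 x t (phix x t) \<ge> 0)))"

end

theory Submission
  imports Defs
begin

text \<open>Multiplying the costate by the integrating factor \<open>e\<^sup>\<lambda>\<^sup>s\<close> removes the damping:
  \<open>w(s) = e\<^sup>\<lambda>\<^sup>s \<eta>(s)\<close> satisfies \<open>w' = -e\<^sup>\<lambda>\<^sup>s D\<^sub>xH\<^sub>0(\<xi>, s, \<eta>)\<close>, and the Lipschitz bound (a) gives
  \<open>|D\<^sub>xH\<^sub>0(x, s, p)| \<le> C\<^sub>1(\<beta> + |p|)\<close>, hence \<open>|w'| \<le> C\<^sub>1\<beta>e\<^sup>\<lambda>\<^sup>s + C\<^sub>1|w|\<close>. Gronwall's inequality,
  run backwards from \<open>s = t\<close> for \<open>w - w(t)\<close> and forwards from \<open>s = 0\<close> for \<open>w - w(0)\<close>, bounds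
  \<open>|w(t) - w(0)|\<close> in terms of \<open>|\<eta>(t)| = |D\<^sub>xu(x,t)|\<close> and of \<open>|\<eta>(0)|\<close> respectively; the bounds on
  \<open>|D\<^sub>xu(x,t)|\<close> then follow from the triangle inequality. Only hypothesis (a) enters: the other
  assumptions on \<open>H\<^sub>0\<close> and the viscosity property serve in the paper to produce a characteristic
  with \<open>\<eta>(t) = D\<^sub>xu(x,t)\<close>, which is assumed here.\<close>

lemma norm_le_of_has_derivative_lipschitz:
  fixes g :: "'a::real_inner \<Rightarrow> real"
  assumes dg: "(g has_derivative (\<lambda>v. d \<bullet> v)) (at x)"
    and lip: "\<And>y. \<bar>g y - g x\<bar> \<le> B * norm (y - x)" and B: "B \<ge> 0"
  shows "norm d \<le> B"
proof -
  have "((\<lambda>h. x + h *\<^sub>R d) has_derivative (\<lambda>h. h *\<^sub>R d)) (at 0)"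
    by (auto intro!: derivative_eq_intros)
  from diff_chain_at[OF this, of g "\<lambda>v. d \<bullet> v"] dg
  have "((\<lambda>h. g (x + h *\<^sub>R d)) has_real_derivative (d \<bullet> d)) (at 0)"
    by (simp add: o_def has_field_derivative_def) (erule has_derivative_eq_rhs, simp add: fun_eq_iff)
  then have lim: "((\<lambda>h. (g (x + h *\<^sub>R d) - g x) / h) \<longlongrightarrow> d \<bullet> d) (at 0)"
    unfolding DERIV_def by simp
  have "\<bar>d \<bullet> d\<bar> \<le> B * norm d"
  proof (rule tendsto_upperbound[OF tendsto_rabs[OF lim]])
    have "\<bar>(g (x + h *\<^sub>R d) - g x) / h\<bar> \<le> B * norm d" if "h \<noteq> 0" for h :: real
      using lip[of "x + h *\<^sub>R d"] that by (simp add: abs_divide divide_le_eq mult_ac)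
    then show "\<forall>\<^sub>F h in at 0. \<bar>(g (x + h *\<^sub>R d) - g x) / h\<bar> \<le> B * norm d"
      by (auto simp: eventually_at_filter)
  qed simp
  then have "norm d * norm d \<le> B * norm d"
    by (simp add: power2_norm_eq_inner[symmetric] power2_eq_square)
  then show ?thesis
    using B by (cases "norm d = 0") auto
qed

lemma DERIV_nonpos_within_imp_nonincreasing:
  fixes f :: "real \<Rightarrow> real"
  assumes "a \<le> b"
    and "\<And>s. s \<in> {a..b} \<Longrightarrow> (f has_real_derivative f' s) (at s within {a..b})"
    and "\<And>s. s \<in> {a..b} \<Longrightarrow> f' s \<le> 0"
  shows "f b \<le> f a"
proof -
  have "(f has_derivative (\<lambda>h. h * f' s)) (at s within {a..b})" if "a \<le> s" "s \<le> b" for s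
    using assms(2)[of s] that by (simp add: has_field_derivative_def mult_commute_abs)
  from mvt_very_simple[OF \<open>a \<le> b\<close> this] obtain s where "s \<in> {a..b}" "f b - f a = (b - a) * f' s"
    by blast
  with assms(1,3) show ?thesis
    by (metis diff_ge_0_iff_ge le_iff_diff_le_0 mult_nonneg_nonpos)
qed

lemma has_real_derivative_smoothed_norm:
  fixes f :: "real \<Rightarrow> 'a::real_inner"
  assumes "e > 0" and "(f has_vector_derivative f') (at s within S)"
  shows "((\<lambda>s. sqrt (f s \<bullet> f s + e\<^sup>2)) has_real_derivative
           (f s \<bullet> f') / sqrt (f s \<bullet> f s + e\<^sup>2)) (at s within S)"
proof -
  have pos: "0 < f s \<bullet> f s + e\<^sup>2"
    using assms(1) by (simp add: add_nonneg_pos)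
  have "((\<lambda>s. f s \<bullet> f s + e\<^sup>2) has_real_derivative 2 * (f s \<bullet> f')) (at s within S)"
    using assms(2) unfolding has_vector_derivative_def has_field_derivative_def
    by (auto intro!: derivative_eq_intros simp: inner_commute fun_eq_iff algebra_simps)
  from DERIV_chain2[OF DERIV_real_sqrt[OF pos] this] show ?thesis
    by (simp add: divide_simps)
qed

lemma smoothed_norm_bounds:
  fixes v w :: "'a::real_inner"
  assumes "e > 0"
  shows "norm v \<le> sqrt (v \<bullet> v + e\<^sup>2)" and "sqrt (v \<bullet> v + e\<^sup>2) \<le> norm v + e"
    and "\<bar>v \<bullet> w\<bar> / sqrt (v \<bullet> v + e\<^sup>2) \<le> norm w"
proof -
  have vv: "v \<bullet> v = (norm v)\<^sup>2"
    by (simp add: power2_norm_eq_inner)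
  show le: "norm v \<le> sqrt (v \<bullet> v + e\<^sup>2)"
    unfolding vv by (rule real_le_rsqrt) simp
  show "sqrt (v \<bullet> v + e\<^sup>2) \<le> norm v + e"
    unfolding vv using assms by (intro real_le_lsqrt) (simp_all add: power2_sum)
  have "\<bar>v \<bullet> w\<bar> \<le> sqrt (v \<bullet> v + e\<^sup>2) * norm w"
    using Cauchy_Schwarz_ineq2[of v w] le by (meson mult_right_mono norm_ge_zero order_trans)
  moreover have "0 < sqrt (v \<bullet> v + e\<^sup>2)"
    using assms by (simp add: add_nonneg_pos)
  ultimately show "\<bar>v \<bullet> w\<bar> / sqrt (v \<bullet> v + e\<^sup>2) \<le> norm w"
    by (simp add: divide_le_eq mult.commute)
qed

lemma gronwall_forward:
  fixes f :: "real \<Rightarrow> 'a::real_inner"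
  assumes "a \<le> b" and "K \<ge> 0"
    and f': "\<And>s. s \<in> {a..b} \<Longrightarrow> (f has_vector_derivative f' s) (at s within {a..b})"
    and f'_bound: "\<And>s. s \<in> {a..b} \<Longrightarrow> norm (f' s) \<le> \<alpha> s + K * norm (f s)"
    and G': "\<And>s. s \<in> {a..b} \<Longrightarrow> (G has_real_derivative exp (- K * s) * \<alpha> s) (at s within {a..b})"
  shows "exp (- K * b) * norm (f b) \<le> exp (- K * a) * norm (f a) + (G b - G a)"
proof (rule field_le_epsilon)
  fix d :: real
  assume "d > 0"
  define e where "e = d / exp (- K * a)"
  have "e > 0"
    using \<open>d > 0\<close> by (simp add: e_def)
  \<comment> \<open>\<open>norm \<circ> f\<close> need not be differentiable where \<open>f\<close> vanishes, so it is smoothed first.\<close>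
  define N where "N s = sqrt (f s \<bullet> f s + e\<^sup>2)" for s
  define N' where "N' s = (f s \<bullet> f' s) / N s" for s
  have N': "(N has_real_derivative N' s) (at s within {a..b})" if "s \<in> {a..b}" for s
    unfolding N_def N'_def by (rule has_real_derivative_smoothed_norm[OF \<open>e > 0\<close> f'[OF that]])
  have N'_bound: "N' s \<le> \<alpha> s + K * N s" if "s \<in> {a..b}" for s
  proof -
    have "N' s \<le> norm (f' s)"
      using smoothed_norm_bounds(3)[OF \<open>e > 0\<close>, of "f s" "f' s"]
      unfolding N'_def N_def by (smt (verit) divide_right_mono real_sqrt_ge_zero zero_le_power2 inner_ge_zero)
    also have "\<dots> \<le> \<alpha> s + K * N s"
      using f'_bound[OF that] smoothed_norm_bounds(1)[OF \<open>e > 0\<close>, of "f s"] \<open>K \<ge> 0\<close>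
      unfolding N_def by (smt (verit) mult_left_mono)
    finally show ?thesis .
  qed
  have "exp (- K * b) * N b - G b \<le> exp (- K * a) * N a - G a"
  proof (rule DERIV_nonpos_within_imp_nonincreasing[OF \<open>a \<le> b\<close>])
    fix s assume s: "s \<in> {a..b}"
    show "((\<lambda>s. exp (- K * s) * N s - G s) has_real_derivative
        exp (- K * s) * (N' s - \<alpha> s - K * N s)) (at s within {a..b})"
      by (auto intro!: derivative_eq_intros N'[OF s] G'[OF s] simp: algebra_simps)
    show "exp (- K * s) * (N' s - \<alpha> s - K * N s) \<le> 0"
      using N'_bound[OF s] by (simp add: mult_nonneg_nonpos)
  qed
  moreover have "norm (f b) \<le> N b" "N a \<le> norm (f a) + e"
    unfolding N_def using smoothed_norm_bounds[OF \<open>e > 0\<close>] by blast+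
  ultimately have "exp (- K * b) * norm (f b) \<le> exp (- K * a) * (norm (f a) + e) + (G b - G a)"
    by (smt (verit) exp_gt_zero mult_left_mono)
  then show "exp (- K * b) * norm (f b) \<le> exp (- K * a) * norm (f a) + (G b - G a) + d"
    by (simp add: e_def algebra_simps)
qed

lemma has_vector_derivative_reflect_interval:
  assumes "(f has_vector_derivative f') (at (- s) within {a..b})"
  shows "((\<lambda>s. f (- s)) has_vector_derivative - f') (at s within {- b..- a})"
proof -
  have "(uminus has_vector_derivative - 1) (at s within {- b..- a})"
    by (auto intro!: derivative_eq_intros)
  moreover have "uminus ` {- b..- a} = {a..b :: real}"
    by simp
  ultimately show ?thesis
    using vector_diff_chain_within[of uminus "- 1" s "{- b..- a}" f f'] assms by (simp add: o_def)
qed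

lemma gronwall_backward:
  fixes f :: "real \<Rightarrow> 'a::real_inner"
  assumes "a \<le> b" and "K \<ge> 0"
    and f': "\<And>s. s \<in> {a..b} \<Longrightarrow> (f has_vector_derivative f' s) (at s within {a..b})"
    and f'_bound: "\<And>s. s \<in> {a..b} \<Longrightarrow> norm (f' s) \<le> \<alpha> s + K * norm (f s)"
    and G': "\<And>s. s \<in> {a..b} \<Longrightarrow> (G has_real_derivative exp (K * s) * \<alpha> s) (at s within {a..b})"
  shows "exp (K * a) * norm (f a) \<le> exp (K * b) * norm (f b) + (G b - G a)"
proof -
  have "exp (- K * (- a)) * norm (f (- (- a)))
      \<le> exp (- K * (- b)) * norm (f (- (- b))) + (- G (- (- a)) - - G (- (- b)))"
  proof (rule gronwall_forward[where f' = "\<lambda>s. - f' (- s)" and \<alpha> = "\<lambda>s. \<alpha> (- s)"])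
    fix s :: real assume "s \<in> {- b..- a}"
    then have s: "- s \<in> {a..b}" by auto
    show "((\<lambda>s. f (- s)) has_vector_derivative - f' (- s)) (at s within {- b..- a})"
      by (rule has_vector_derivative_reflect_interval[OF f'[OF s]])
    show "norm (- f' (- s)) \<le> \<alpha> (- s) + K * norm (f (- s))"
      using f'_bound[OF s] by simp
    have "((\<lambda>s. G (- s)) has_vector_derivative - (exp (K * - s) * \<alpha> (- s))) (at s within {- b..- a})"
      using has_vector_derivative_reflect_interval G'[OF s]
      by (simp add: has_real_derivative_iff_has_vector_derivative)
    then show "((\<lambda>s. - G (- s)) has_real_derivative exp (- K * s) * \<alpha> (- s)) (at s within {- b..- a})"
      by (auto simp: has_real_derivative_iff_has_vector_derivative dest: has_vector_derivative_minus)
  qed (use assms in auto)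
  then show ?thesis
    by simp
qed

locale damped_costate =
  fixes eta F :: "real \<Rightarrow> 'a::real_inner" and lam C1 beta t :: real
  assumes C1_nonneg: "C1 \<ge> 0" and beta_nonneg: "beta \<ge> 0" and t_nonneg: "t \<ge> 0"
    and eta_ode: "\<And>s. s \<in> {0..t} \<Longrightarrow>
      (eta has_vector_derivative (- F s - lam *\<^sub>R eta s)) (at s within {0..t})"
    and F_bound: "\<And>s. s \<in> {0..t} \<Longrightarrow> norm (F s) \<le> C1 * (beta + norm (eta s))"
begin

definition scaled_eta :: "real \<Rightarrow> 'a" where
  "scaled_eta s = exp (lam * s) *\<^sub>R eta s"

lemma scaled_eta_derivative:
  assumes "s \<in> {0..t}"
  shows "(scaled_eta has_vector_derivative - (exp (lam * s) *\<^sub>R F s)) (at s within {0..t})"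
  unfolding scaled_eta_def
  by (auto intro!: derivative_eq_intros eta_ode[OF assms] simp: algebra_simps)

lemma scaled_eta_derivative_bound:
  assumes "s \<in> {0..t}"
  shows "norm (- (exp (lam * s) *\<^sub>R F s)) \<le> C1 * beta * exp (lam * s) + C1 * norm (scaled_eta s)"
  using mult_left_mono[OF F_bound[OF assms], of "exp (lam * s)"]
  by (simp add: scaled_eta_def algebra_simps)

lemma scaled_eta_increment_forward:
  assumes G': "\<And>s. s \<in> {0..t} \<Longrightarrow> (G has_real_derivative
      exp (- C1 * s) * (C1 * beta * exp (lam * s) + C1 * norm (eta 0))) (at s within {0..t})"
  shows "exp (- C1 * t) * norm (scaled_eta t - scaled_eta 0) \<le> G t - G 0"
proof -
  have "exp (- C1 * t) * norm (scaled_eta t - scaled_eta 0)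
      \<le> exp (- C1 * 0) * norm (scaled_eta 0 - scaled_eta 0) + (G t - G 0)"
  proof (rule gronwall_forward[OF t_nonneg C1_nonneg _ _ G'])
    fix s assume s: "s \<in> {0..t}"
    show "((\<lambda>s. scaled_eta s - scaled_eta 0) has_vector_derivative - (exp (lam * s) *\<^sub>R F s))
        (at s within {0..t})"
      by (auto intro!: derivative_eq_intros scaled_eta_derivative[OF s])
    have "norm (scaled_eta s) \<le> norm (scaled_eta s - scaled_eta 0) + norm (eta 0)"
      using norm_triangle_sub[of "scaled_eta s" "scaled_eta 0"] by (simp add: scaled_eta_def)
    then have "C1 * norm (scaled_eta s) \<le> C1 * norm (scaled_eta s - scaled_eta 0) + C1 * norm (eta 0)"
      using C1_nonneg by (metis distrib_left mult_left_mono)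
    then show "norm (- (exp (lam * s) *\<^sub>R F s))
        \<le> C1 * beta * exp (lam * s) + C1 * norm (eta 0) + C1 * norm (scaled_eta s - scaled_eta 0)"
      using scaled_eta_derivative_bound[OF s] by linarith
  qed
  then show ?thesis
    by simp
qed

lemma scaled_eta_increment_backward:
  assumes G': "\<And>s. s \<in> {0..t} \<Longrightarrow> (G has_real_derivative
      exp (C1 * s) * (C1 * beta * exp (lam * s) + C1 * norm (scaled_eta t))) (at s within {0..t})"
  shows "norm (scaled_eta t - scaled_eta 0) \<le> G t - G 0"
proof -
  have "exp (C1 * 0) * norm (scaled_eta 0 - scaled_eta t)
      \<le> exp (C1 * t) * norm (scaled_eta t - scaled_eta t) + (G t - G 0)"
  proof (rule gronwall_backward[OF t_nonneg C1_nonneg _ _ G'])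
    fix s assume s: "s \<in> {0..t}"
    show "((\<lambda>s. scaled_eta s - scaled_eta t) has_vector_derivative - (exp (lam * s) *\<^sub>R F s))
        (at s within {0..t})"
      by (auto intro!: derivative_eq_intros scaled_eta_derivative[OF s])
    have "norm (scaled_eta s) \<le> norm (scaled_eta s - scaled_eta t) + norm (scaled_eta t)"
      using norm_triangle_sub[of "scaled_eta s" "scaled_eta t"] by simp
    then have "C1 * norm (scaled_eta s) \<le> C1 * norm (scaled_eta s - scaled_eta t) + C1 * norm (scaled_eta t)"
      using C1_nonneg by (metis distrib_left mult_left_mono)
    then show "norm (- (exp (lam * s) *\<^sub>R F s))
        \<le> C1 * beta * exp (lam * s) + C1 * norm (scaled_eta t) + C1 * norm (scaled_eta s - scaled_eta t)"
      using scaled_eta_derivative_bound[OF s] by linarith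
  qed
  then show ?thesis
    by (simp add: norm_minus_commute)
qed

lemma norm_scaled_eta: "norm (scaled_eta s) = exp (lam * s) * norm (eta s)"
  by (simp add: scaled_eta_def)

lemma norm_deviation_eq_scaled_increment:
  "norm (eta t - exp (- lam * t) *\<^sub>R eta 0) = exp (- lam * t) * norm (scaled_eta t - scaled_eta 0)"
proof -
  have "eta t - exp (- lam * t) *\<^sub>R eta 0 = exp (- lam * t) *\<^sub>R (scaled_eta t - scaled_eta 0)"
    by (simp add: scaled_eta_def algebra_simps flip: exp_add)
  then show ?thesis
    by simp
qed

lemma deviation_bound_by_final:
  assumes "lam \<noteq> - C1"
  shows "norm (eta t - exp (- lam * t) *\<^sub>R eta 0)
    \<le> C1 * beta / (C1 + lam) * (exp (C1 * t) - exp (- lam * t)) + norm (eta t) * (exp (C1 * t) - 1)"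
proof -
  define c where "c = C1 * beta / (C1 + lam)"
  have c: "c * (C1 + lam) = C1 * beta"
    using assms by (simp add: c_def)
  define G where "G s = c * exp ((C1 + lam) * s) + norm (scaled_eta t) * exp (C1 * s)" for s
  have "norm (scaled_eta t - scaled_eta 0) \<le> G t - G 0"
  proof (rule scaled_eta_increment_backward)
    fix s assume "s \<in> {0..t}"
    show "(G has_real_derivative
        exp (C1 * s) * (C1 * beta * exp (lam * s) + C1 * norm (scaled_eta t))) (at s within {0..t})"
      unfolding G_def
      by (rule derivative_eq_intros refl)+ (simp add: c[symmetric] distrib_right exp_add algebra_simps)
  qed
  from mult_left_mono[OF this, of "exp (- lam * t)"] show ?thesis
    unfolding norm_deviation_eq_scaled_increment G_def c_def[symmetric]
    by (simp add: scaled_eta_def distrib_right exp_add exp_minus field_simps)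
qed

lemma deviation_bound_by_final_resonant:
  assumes "lam = - C1"
  shows "norm (eta t - exp (C1 * t) *\<^sub>R eta 0)
    \<le> C1 * beta * t * exp (C1 * t) + norm (eta t) * (exp (C1 * t) - 1)"
proof -
  define G where "G s = C1 * beta * s + norm (scaled_eta t) * exp (C1 * s)" for s
  have "norm (scaled_eta t - scaled_eta 0) \<le> G t - G 0"
  proof (rule scaled_eta_increment_backward)
    fix s assume "s \<in> {0..t}"
    show "(G has_real_derivative
        exp (C1 * s) * (C1 * beta * exp (lam * s) + C1 * norm (scaled_eta t))) (at s within {0..t})"
      unfolding G_def
      by (rule derivative_eq_intros refl)+ (simp add: assms exp_minus field_simps)
  qed
  moreover have "exp (- lam * t) = exp (C1 * t)"
    using assms by simp
  ultimately have "norm (eta t - exp (C1 * t) *\<^sub>R eta 0)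
      \<le> exp (C1 * t) * (C1 * beta * t + exp (lam * t) * norm (eta t) * (exp (C1 * t) - 1))"
    using norm_deviation_eq_scaled_increment[unfolded \<open>exp (- lam * t) = exp (C1 * t)\<close>]
    by (simp add: G_def norm_scaled_eta right_diff_distrib)
  also have "\<dots> = C1 * beta * t * exp (C1 * t) + norm (eta t) * (exp (C1 * t) - 1)"
    using assms by (simp add: exp_minus field_simps)
  finally show ?thesis .
qed

lemma deviation_bound_by_initial:
  assumes "lam \<noteq> C1"
  shows "norm (eta t - exp (- lam * t) *\<^sub>R eta 0)
    \<le> C1 * beta / (C1 - lam) * (exp ((C1 - lam) * t) - 1)
       + norm (eta 0) * (exp ((C1 - lam) * t) - exp (- lam * t))"
proof -
  define c where "c = C1 * beta / (C1 - lam)"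
  have c: "c * (C1 - lam) = C1 * beta"
    using assms by (simp add: c_def)
  define G where "G s = norm (eta 0) * - exp (- C1 * s) - c * exp ((lam - C1) * s)" for s
  have "exp (- C1 * t) * norm (scaled_eta t - scaled_eta 0) \<le> G t - G 0"
  proof (rule scaled_eta_increment_forward)
    fix s assume "s \<in> {0..t}"
    show "(G has_real_derivative
        exp (- C1 * s) * (C1 * beta * exp (lam * s) + C1 * norm (eta 0))) (at s within {0..t})"
      unfolding G_def
      by (rule derivative_eq_intros refl)+ (simp add: c[symmetric] left_diff_distrib exp_diff exp_minus field_simps)
  qed
  from mult_left_mono[OF this, of "exp ((C1 - lam) * t)"]
  have "exp (- lam * t) * norm (scaled_eta t - scaled_eta 0) \<le> exp ((C1 - lam) * t) * (G t - G 0)"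
    by (simp add: mult.assoc[symmetric] algebra_simps flip: exp_add)
  also have "\<dots> = c * (exp ((C1 - lam) * t) - 1) + norm (eta 0) * (exp ((C1 - lam) * t) - exp (- lam * t))"
    by (simp add: G_def left_diff_distrib exp_diff exp_minus field_simps)
  finally show ?thesis
    by (simp only: norm_deviation_eq_scaled_increment c_def)
qed

lemma deviation_bound_by_initial_resonant:
  assumes "lam = C1"
  shows "norm (eta t - exp (- C1 * t) *\<^sub>R eta 0)
    \<le> C1 * beta * t + norm (eta 0) * (1 - exp (- C1 * t))"
proof -
  define G where "G s = C1 * beta * s - norm (eta 0) * exp (- C1 * s)" for s
  have "exp (- C1 * t) * norm (scaled_eta t - scaled_eta 0) \<le> G t - G 0"
  proof (rule scaled_eta_increment_forward)
    fix s assume "s \<in> {0..t}"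
    show "(G has_real_derivative
        exp (- C1 * s) * (C1 * beta * exp (lam * s) + C1 * norm (eta 0))) (at s within {0..t})"
      unfolding G_def
      by (rule derivative_eq_intros refl)+ (simp add: assms exp_minus field_simps)
  qed
  then show ?thesis
    using norm_deviation_eq_scaled_increment by (simp add: assms G_def algebra_simps)
qed

lemma norm_eta_lower_bound:
  assumes "lam \<noteq> - C1"
  shows "norm (eta t) \<ge> norm (eta 0) * exp (- (C1 + lam) * t)
    - C1 * beta / (C1 + lam) * (1 - exp (- (C1 + lam) * t))"
proof -
  define c where "c = C1 * beta / (C1 + lam)"
  have "exp (- lam * t) * norm (eta 0) - norm (eta t) \<le> norm (eta t - exp (- lam * t) *\<^sub>R eta 0)"
    using norm_triangle_ineq2[of "exp (- lam * t) *\<^sub>R eta 0" "eta t"] by (simp add: norm_minus_commute)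
  with deviation_bound_by_final[OF assms]
  have "exp (- lam * t) * norm (eta 0) - c * (exp (C1 * t) - exp (- lam * t)) \<le> exp (C1 * t) * norm (eta t)"
    unfolding c_def by (simp add: algebra_simps)
  from mult_left_mono[OF this, of "exp (- C1 * t)"] show ?thesis
    unfolding c_def[symmetric] by (simp add: distrib_right exp_add exp_diff exp_minus field_simps)
qed

lemma norm_eta_lower_bound_resonant:
  assumes "lam = - C1"
  shows "norm (eta t) \<ge> norm (eta 0) - C1 * beta * t"
proof -
  have "exp (C1 * t) * norm (eta 0) - norm (eta t) \<le> norm (eta t - exp (C1 * t) *\<^sub>R eta 0)"
    using norm_triangle_ineq2[of "exp (C1 * t) *\<^sub>R eta 0" "eta t"] by (simp add: norm_minus_commute)
  with deviation_bound_by_final_resonant[OF assms]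
  have "exp (C1 * t) * (norm (eta 0) - C1 * beta * t) \<le> exp (C1 * t) * norm (eta t)"
    by (simp add: algebra_simps)
  then show ?thesis
    by simp
qed

lemma norm_eta_upper_bound:
  assumes "lam \<noteq> C1"
  shows "norm (eta t) \<le> norm (eta 0) * exp ((C1 - lam) * t)
    + C1 * beta / (C1 - lam) * (exp ((C1 - lam) * t) - 1)"
  using deviation_bound_by_initial[OF assms]
    norm_triangle_ineq[of "eta t - exp (- lam * t) *\<^sub>R eta 0" "exp (- lam * t) *\<^sub>R eta 0"]
  by (simp add: algebra_simps)

lemma norm_eta_upper_bound_resonant:
  assumes "lam = C1"
  shows "norm (eta t) \<le> norm (eta 0) + C1 * beta * t"
  using deviation_bound_by_initial_resonant[OF assms]
    norm_triangle_ineq[of "eta t - exp (- C1 * t) *\<^sub>R eta 0" "exp (- C1 * t) *\<^sub>R eta 0"]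
  by (simp add: algebra_simps)

end

theorem proposition6p1:
  fixes T lam C1 beta A2 B2 :: real
    and H0 :: "'a::euclidean_space \<Rightarrow> real \<Rightarrow> 'a \<Rightarrow> real"
    and Dx Dp :: "'a \<Rightarrow> real \<Rightarrow> 'a \<Rightarrow> 'a"
    and u0 :: "'a \<Rightarrow> real" and u :: "'a \<Rightarrow> real \<Rightarrow> real"
    and x :: 'a and t :: real and Du :: 'a and ut :: real
    and xi eta :: "real \<Rightarrow> 'a"
  assumes T_pos: "T > 0"
    and u0_lip: "\<exists>L. L-lipschitz_on UNIV u0"
    and C1_nonneg: "C1 \<ge> 0" and beta01: "beta \<in> {0, 1}"
    and Hx: "\<And>x y t p. t \<in> {0..T} \<Longrightarrow>
               \<bar>H0 x t p - H0 y t p\<bar> \<le> C1 * (beta + norm p) * norm (x - y)"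
    and A2_nonneg: "A2 \<ge> 0" and B2_nonneg: "B2 \<ge> 0"
    and Hp: "\<And>x t p q. t \<in> {0..T} \<Longrightarrow>
               \<bar>H0 x t p - H0 x t q\<bar> \<le> (A2 * norm x + B2) * norm (p - q)"
    and Hconv: "\<And>x t. t \<in> {0..T} \<Longrightarrow> convex_on UNIV (H0 x t)"
    and HC2: "C2_on (UNIV \<times> {0..T} \<times> UNIV) (\<lambda>(x, t, p). H0 x t p)"
    and Dx_def: "\<And>x t p. t \<in> {0..T} \<Longrightarrow>
               ((\<lambda>y. H0 y t p) has_derivative (\<lambda>v. Dx x t p \<bullet> v)) (at x)"
    and Dp_def: "\<And>x t p. t \<in> {0..T} \<Longrightarrow>
               ((\<lambda>q. H0 x t q) has_derivative (\<lambda>v. Dp x t p \<bullet> v)) (at p)"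
    and Hpp_posdef: "\<And>x t p. t \<in> {0..T} \<Longrightarrow>
               \<exists>L. (Dp x t has_derivative L) (at p) \<and> (\<forall>v. v \<noteq> 0 \<longrightarrow> v \<bullet> L v > 0)"
    and visc: "viscosity_solution T lam H0 u0 u"
    and t_in: "0 < t" "t < T"
    and u_diff: "((\<lambda>(y, s). u y s) has_derivative (\<lambda>(h, k). Du \<bullet> h + ut * k)) (at (x, t))"
    and xi_ode: "\<And>s. s \<in> {0..t} \<Longrightarrow>
               (xi has_vector_derivative Dp (xi s) s (eta s)) (at s within {0..t})"
    and eta_ode: "\<And>s. s \<in> {0..t} \<Longrightarrow>
               (eta has_vector_derivative (- Dx (xi s) s (eta s) - lam *\<^sub>R eta s)) (at s within {0..t})"
    and xi_end: "xi t = x" and eta_end: "eta t = Du"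
  shows
    "(lam \<noteq> - C1 \<longrightarrow> norm (Du - exp (- lam * t) *\<^sub>R eta 0)
        \<le> C1 * beta / (C1 + lam) * (exp (C1 * t) - exp (- lam * t)) + norm Du * (exp (C1 * t) - 1)) \<and>
     (lam = - C1 \<longrightarrow> norm (Du - exp (C1 * t) *\<^sub>R eta 0)
        \<le> C1 * beta * t * exp (C1 * t) + norm Du * (exp (C1 * t) - 1)) \<and>
     (lam \<noteq> C1 \<longrightarrow> norm (Du - exp (- lam * t) *\<^sub>R eta 0)
        \<le> C1 * beta / (C1 - lam) * (exp ((C1 - lam) * t) - 1)
           + norm (eta 0) * (exp ((C1 - lam) * t) - exp (- lam * t))) \<and>
     (lam = C1 \<longrightarrow> norm (Du - exp (- C1 * t) *\<^sub>R eta 0)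
        \<le> C1 * beta * t + norm (eta 0) * (1 - exp (- C1 * t))) \<and>
     (lam \<noteq> - C1 \<longrightarrow> norm Du \<ge> norm (eta 0) * exp (- (C1 + lam) * t)
        - C1 * beta / (C1 + lam) * (1 - exp (- (C1 + lam) * t))) \<and>
     (lam = - C1 \<longrightarrow> norm Du \<ge> norm (eta 0) - C1 * beta * t) \<and>
     (lam \<noteq> C1 \<longrightarrow> norm Du \<le> norm (eta 0) * exp ((C1 - lam) * t)
        + C1 * beta / (C1 - lam) * (exp ((C1 - lam) * t) - 1)) \<and>
     (lam = C1 \<longrightarrow> norm Du \<le> norm (eta 0) + C1 * beta * t)"
proof -
  have beta_nonneg: "beta \<ge> 0"
    using beta01 by auto
  have "norm (Dx (xi s) s (eta s)) \<le> C1 * (beta + norm (eta s))" if "s \<in> {0..t}" for s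
  proof (rule norm_le_of_has_derivative_lipschitz)
    have s: "s \<in> {0..T}"
      using that t_in by auto
    show "((\<lambda>y. H0 y s (eta s)) has_derivative (\<lambda>v. Dx (xi s) s (eta s) \<bullet> v)) (at (xi s))"
      by (rule Dx_def[OF s])
    show "\<bar>H0 y s (eta s) - H0 (xi s) s (eta s)\<bar> \<le> C1 * (beta + norm (eta s)) * norm (y - xi s)" for y
      by (rule Hx[OF s])
  qed (use C1_nonneg beta_nonneg in simp)
  then interpret damped_costate eta "\<lambda>s. Dx (xi s) s (eta s)" lam C1 beta t
    using C1_nonneg beta_nonneg t_in eta_ode by unfold_locales auto
  show ?thesis
    using deviation_bound_by_final deviation_bound_by_final_resonant
      deviation_bound_by_initial deviation_bound_by_initial_resonant
      norm_eta_lower_bound norm_eta_lower_bound_resonant norm_eta_upper_bound norm_eta_upper_bound_resonant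
    unfolding eta_end by blast
qed

end
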